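(* Let $(L,\mathbf N)$ be an architecture with $L\ge2$, input dimension $d_{\mathrm{in}}=N_0$, output dimension $d_{\mathrm{out}}=N_L$, width $W=\max_\ell N_\ell$, let $D>0$, and consider $\|f\|_\infty=\operatorname{ess\,sup}_{x\in[-D,D]^{d_{\mathrm{in}}}}\|f(x)\|_\infty$ (Lebesgue measure). Let $\varepsilon\in(0,1/2)$ and $\theta\in\Theta_{L,\mathbf N}$, and let $k\ge0$ be the smallest integer such that $\|\theta\|_\infty\le\varepsilon^{-k}$ and $\max(W,L)\le\varepsilon^{-k}$. Let $m$ be an integer with $m\ge 2kL+k+1+\log_2(\lceil D\rceil)$ and $\eta:=2^{-m\lceil\log_2(\varepsilon^{-1})\rceil}$ (so $\eta\le\varepsilon^m$). Let $Q_\eta(\theta)$ be obtained by replacing each coordinate of $\theta$ by a closest point of $\eta\mathbb Z\cap[-\varepsilon^{-k},\varepsilon^{-k}]$. Then $Q_\eta(\theta)\in\Theta^{\max}_{L,\mathbf N}(\varepsilon^{-k})\cap(\eta\mathbb Z)^{d_{L,\mathbf N}}$ and $\|R_\theta-R_{Q_\eta(\theta)}\|_\infty\le\varepsilon$.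
   Context: ReLU $\rho(x)=\max(0,x)$ coordinatewise. Architecture $(L,\mathbf N)$, $\mathbf N=(N_0,\dots,N_L)$; parameters $\theta=(W_1,\dots,W_L,b_1,\dots,b_L)$, $W_\ell\in\mathbb R^{N_\ell\times N_{\ell-1}}$, $b_\ell\in\mathbb R^{N_\ell}$, forming $\Theta_{L,\mathbf N}\cong\mathbb R^{d_{L,\mathbf N}}$, $d_{L,\mathbf N}=\sum_\ell N_\ell(N_{\ell-1}+1)$; $\|\theta\|_\infty$ = max absolute value of coordinates. Realization: $R_\theta(x)=W_Ly_{L-1}(x)+b_L$, $y_0=x$, $y_\ell=\rho(W_\ell y_{\ell-1}+b_\ell)$, $1\le\ell\le L-1$. $\Theta^{\max}_{L,\mathbf N}(r)$ is the set of $\theta$ all of whose entries (of all $W_\ell,b_\ell$) have absolute value at most $r$. *)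

theory Defs
  imports "HOL-Analysis.Analysis" "HOL-Probability.Essential_Supremum"
begin

text \<open>Architecture: list N = [N_0,...,N_L], so L = length N - 1.
 Parameters: weights Wt l i j (layer l in 1..L, row i < N_l, column j < N_(l-1))
 and biases bs l i (i < N_l). Vectors are functions nat => real, only the
 indices below the relevant dimension matter.\<close>

definition depth :: "nat list \<Rightarrow> nat" where
  "depth N = length N - 1"

definition width :: "nat list \<Rightarrow> nat" where
  "width N = Max (set N)"

definition relu :: "real \<Rightarrow> real" where
  "relu x = max 0 x"

definition affine_layer ::
  "nat list \<Rightarrow> (nat \<Rightarrow> nat \<Rightarrow> nat \<Rightarrow> real) \<Rightarrow> (nat \<Rightarrow> nat \<Rightarrow> real) \<Rightarrow> nat
   \<Rightarrow> (nat \<Rightarrow> real) \<Rightarrow> (nat \<Rightarrow> real)" where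
  "affine_layer N Wt bs l y =
     (\<lambda>i. if i < N ! l then (\<Sum>j<N ! (l - 1). Wt l i j * y j) + bs l i else 0)"

fun hidden ::
  "nat list \<Rightarrow> (nat \<Rightarrow> nat \<Rightarrow> nat \<Rightarrow> real) \<Rightarrow> (nat \<Rightarrow> nat \<Rightarrow> real) \<Rightarrow> nat
   \<Rightarrow> (nat \<Rightarrow> real) \<Rightarrow> (nat \<Rightarrow> real)" where
  "hidden N Wt bs 0 x = x"
| "hidden N Wt bs (Suc l) x = (\<lambda>i. relu (affine_layer N Wt bs (Suc l) (hidden N Wt bs l x) i))"

definition realization ::
  "nat list \<Rightarrow> (nat \<Rightarrow> nat \<Rightarrow> nat \<Rightarrow> real) \<Rightarrow> (nat \<Rightarrow> nat \<Rightarrow> real)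
   \<Rightarrow> (nat \<Rightarrow> real) \<Rightarrow> (nat \<Rightarrow> real)" where
  "realization N Wt bs x =
     affine_layer N Wt bs (depth N) (hidden N Wt bs (depth N - 1) x)"

definition param_abs_values ::
  "nat list \<Rightarrow> (nat \<Rightarrow> nat \<Rightarrow> nat \<Rightarrow> real) \<Rightarrow> (nat \<Rightarrow> nat \<Rightarrow> real) \<Rightarrow> real set" where
  "param_abs_values N Wt bs =
     {\<bar>Wt l i j\<bar> | l i j. 1 \<le> l \<and> l \<le> depth N \<and> i < N ! l \<and> j < N ! (l - 1)}
     \<union> {\<bar>bs l i\<bar> | l i. 1 \<le> l \<and> l \<le> depth N \<and> i < N ! l}"

definition param_norm ::
  "nat list \<Rightarrow> (nat \<Rightarrow> nat \<Rightarrow> nat \<Rightarrow> real) \<Rightarrow> (nat \<Rightarrow> nat \<Rightarrow> real) \<Rightarrow> real" where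
  "param_norm N Wt bs = Max (param_abs_values N Wt bs)"

definition all_coords ::
  "nat list \<Rightarrow> (nat \<Rightarrow> nat \<Rightarrow> nat \<Rightarrow> real) \<Rightarrow> (nat \<Rightarrow> nat \<Rightarrow> real) \<Rightarrow> (real \<Rightarrow> bool) \<Rightarrow> bool" where
  "all_coords N Wt bs P \<longleftrightarrow>
     (\<forall>l i j. 1 \<le> l \<and> l \<le> depth N \<and> i < N ! l \<and> j < N ! (l - 1) \<longrightarrow> P (Wt l i j))
   \<and> (\<forall>l i. 1 \<le> l \<and> l \<le> depth N \<and> i < N ! l \<longrightarrow> P (bs l i))"

definition all_coords2 ::
  "nat list \<Rightarrow> (nat \<Rightarrow> nat \<Rightarrow> nat \<Rightarrow> real) \<Rightarrow> (nat \<Rightarrow> nat \<Rightarrow> real)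
   \<Rightarrow> (nat \<Rightarrow> nat \<Rightarrow> nat \<Rightarrow> real) \<Rightarrow> (nat \<Rightarrow> nat \<Rightarrow> real) \<Rightarrow> (real \<Rightarrow> real \<Rightarrow> bool) \<Rightarrow> bool" where
  "all_coords2 N Wt bs Wq bq P \<longleftrightarrow>
     (\<forall>l i j. 1 \<le> l \<and> l \<le> depth N \<and> i < N ! l \<and> j < N ! (l - 1) \<longrightarrow> P (Wt l i j) (Wq l i j))
   \<and> (\<forall>l i. 1 \<le> l \<and> l \<le> depth N \<and> i < N ! l \<longrightarrow> P (bs l i) (bq l i))"

definition in_Theta_max ::
  "nat list \<Rightarrow> real \<Rightarrow> (nat \<Rightarrow> nat \<Rightarrow> nat \<Rightarrow> real) \<Rightarrow> (nat \<Rightarrow> nat \<Rightarrow> real) \<Rightarrow> bool" where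
  "in_Theta_max N r Wt bs \<longleftrightarrow> all_coords N Wt bs (\<lambda>t. \<bar>t\<bar> \<le> r)"

definition grid :: "real \<Rightarrow> real \<Rightarrow> real set" where
  "grid \<eta> r = {\<eta> * of_int z | z. True} \<inter> {-r..r}"

definition is_closest_point :: "real set \<Rightarrow> real \<Rightarrow> real \<Rightarrow> bool" where
  "is_closest_point S t q \<longleftrightarrow> q \<in> S \<and> (\<forall>s\<in>S. \<bar>t - q\<bar> \<le> \<bar>t - s\<bar>)"

definition cube_measure :: "nat \<Rightarrow> real \<Rightarrow> (nat \<Rightarrow> real) measure" where
  "cube_measure d D = restrict_space (Pi\<^sub>M {..<d} (\<lambda>_. lborel)) (Pi\<^sub>E {..<d} (\<lambda>_. {-D..D}))"

definition sup_norm_cube :: "nat \<Rightarrow> nat \<Rightarrow> real \<Rightarrow> ((nat \<Rightarrow> real) \<Rightarrow> (nat \<Rightarrow> real)) \<Rightarrow> ereal" where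
  "sup_norm_cube din dout D f =
     esssup (cube_measure din D) (\<lambda>x. ereal (Max ((\<lambda>i. \<bar>f x i\<bar>) ` {..<dout})))"

end

theory Submission
  imports Defs
begin

text \<open>Rounding a parameter to a nearest grid point moves it by at most \<open>\<eta>\<close> and keeps it in
  \<open>[-r, r]\<close>, where \<open>r = \<epsilon> powr -k\<close>. As all widths are at most \<open>r\<close> and ReLU is 1-Lipschitz,
  induction over the layers bounds the hidden activations by \<open>|y_l| + 1 \<le> r^(2l) (D + 1)\<close> and
  their deviation between the two networks by \<open>l \<eta> r^(2l) (D + 1) / r\<close>. Using \<open>L \<le> r\<close>, the
  output error is at most \<open>\<eta> r^(2L) (D + 1) \<le> \<epsilon>^(m - 2kL - k) \<lceil>D\<rceil> \<le> \<epsilon>\<close> by the choice of \<open>m\<close>.\<close>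

lemma cube_coordinate_measurable: "(\<lambda>x. x i) \<in> borel_measurable (cube_measure d D)"
proof (cases "i < d")
  case True
  then show ?thesis unfolding cube_measure_def
    by (intro measurable_restrict_space1) (auto intro!: measurable_component_singleton)
next
  case False
  have "(\<lambda>x. x i) \<in> borel_measurable (cube_measure d D) \<longleftrightarrow> (\<lambda>x. undefined::real) \<in> borel_measurable (cube_measure d D)"
    by (rule measurable_cong) (use False in \<open>auto simp: cube_measure_def space_restrict_space space_PiM PiE_def extensional_def\<close>)
  then show ?thesis by simp
qed

lemma hidden_measurable: "(\<lambda>x. hidden N Wt bs l x i) \<in> borel_measurable (cube_measure d D)"
proof (induction l arbitrary: i)
  case 0
  then show ?case using cube_coordinate_measurable by simp
next
  case (Suc l)
  then show ?case unfolding hidden.simps relu_def affine_layer_def by measurable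
qed

lemma realization_measurable: "(\<lambda>x. realization N Wt bs x i) \<in> borel_measurable (cube_measure d D)"
  unfolding realization_def affine_layer_def using hidden_measurable by measurable

lemma sup_norm_cube_le:
  assumes meas: "\<And>i. (\<lambda>x. f x i) \<in> borel_measurable (cube_measure d D)"
    and "0 < dout"
    and bound: "\<And>x i. \<forall>j<d. \<bar>x j\<bar> \<le> D \<Longrightarrow> i < dout \<Longrightarrow> \<bar>f x i\<bar> \<le> c"
  shows "sup_norm_cube d dout D f \<le> ereal c"
  unfolding sup_norm_cube_def
proof (rule esssup_I)
  show "(\<lambda>x. ereal (Max ((\<lambda>i. \<bar>f x i\<bar>) ` {..<dout}))) \<in> borel_measurable (cube_measure d D)"
    using meas by measurable
  have "Max ((\<lambda>i. \<bar>f x i\<bar>) ` {..<dout}) \<le> c" if "x \<in> space (cube_measure d D)" for x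
  proof -
    have "\<forall>j<d. \<bar>x j\<bar> \<le> D"
      using that by (auto simp: cube_measure_def space_restrict_space space_PiM PiE_def Pi_def)
    then show ?thesis using bound \<open>0 < dout\<close> by (subst Max_le_iff) auto
  qed
  then show "AE x in cube_measure d D. ereal (Max ((\<lambda>i. \<bar>f x i\<bar>) ` {..<dout})) \<le> ereal c"
    by auto
qed

lemma finite_param_abs_values: "finite (param_abs_values N Wt bs)"
proof (rule finite_subset)
  show "param_abs_values N Wt bs \<subseteq>
      (\<lambda>(l, i, j). \<bar>Wt l i j\<bar>) ` (SIGMA l:{..depth N}. {..<N ! l} \<times> {..<N ! (l - 1)})
    \<union> (\<lambda>(l, i). \<bar>bs l i\<bar>) ` (SIGMA l:{..depth N}. {..<N ! l})"
    unfolding param_abs_values_def by force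
qed auto

lemma in_Theta_max_param_norm: "in_Theta_max N (param_norm N Wt bs) Wt bs"
  using finite_param_abs_values[of N Wt bs]
  unfolding in_Theta_max_def all_coords_def param_norm_def
  by (auto intro!: Max_ge simp: param_abs_values_def)

lemma in_Theta_max_mono: "in_Theta_max N r Wt bs \<Longrightarrow> r \<le> s \<Longrightarrow> in_Theta_max N s Wt bs"
  unfolding in_Theta_max_def all_coords_def by force

lemma grid_point_within:
  fixes \<eta> r t :: real
  assumes "\<eta> > 0" and "\<bar>t\<bar> \<le> r"
  obtains s where "s \<in> grid \<eta> r" and "\<bar>t - s\<bar> \<le> \<eta>"
proof -
  define z where "z = \<lfloor>\<bar>t\<bar> / \<eta>\<rfloor>"
  have "of_int z \<le> \<bar>t\<bar> / \<eta>" "\<bar>t\<bar> / \<eta> < of_int z + 1" "0 \<le> z"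
    unfolding z_def using assms(1) by auto
  then have "\<eta> * of_int z \<le> \<bar>t\<bar>" "\<bar>t\<bar> < \<eta> * of_int z + \<eta>" "0 \<le> \<eta> * of_int z"
    using assms(1) by (auto simp: field_simps)
  moreover define s where "s = \<eta> * of_int (if t \<ge> 0 then z else - z)"
  ultimately have "s \<in> grid \<eta> r" "\<bar>t - s\<bar> \<le> \<eta>"
    using assms unfolding grid_def by (auto simp: abs_if)
  then show ?thesis by (rule that)
qed

lemma closest_grid_point:
  fixes \<eta> r t q :: real
  assumes "\<eta> > 0" and "\<bar>t\<bar> \<le> r" and "is_closest_point (grid \<eta> r) t q"
  shows "\<bar>q\<bar> \<le> r" and "q \<in> {\<eta> * of_int z | z. True}" and "\<bar>t - q\<bar> \<le> \<eta>"
proof -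
  obtain s where "s \<in> grid \<eta> r" "\<bar>t - s\<bar> \<le> \<eta>" using grid_point_within assms(1,2) .
  then show "\<bar>q\<bar> \<le> r" "q \<in> {\<eta> * of_int z | z. True}" "\<bar>t - q\<bar> \<le> \<eta>"
    using assms(3) unfolding is_closest_point_def grid_def by force+
qed

lemma closest_grid_quantization:
  assumes "\<eta> > 0" and "in_Theta_max N r Wt bs"
    and "all_coords2 N Wt bs Wq bq (is_closest_point (grid \<eta> r))"
  shows "in_Theta_max N r Wq bq"
    and "all_coords N Wq bq (\<lambda>q. q \<in> {\<eta> * of_int z | z. True})"
    and "all_coords2 N Wt bs Wq bq (\<lambda>t q. \<bar>t - q\<bar> \<le> \<eta>)"
  using assms closest_grid_point[OF \<open>\<eta> > 0\<close>]
  unfolding in_Theta_max_def all_coords_def all_coords2_def by meson+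

lemma abs_affine_le:
  fixes r B b :: real
  assumes "real n \<le> r" "\<forall>j<n. \<bar>y j\<bar> \<le> B" "\<forall>j<n. \<bar>w j\<bar> \<le> r" "\<bar>b\<bar> \<le> r" "B \<ge> 0" "r \<ge> 0"
  shows "\<bar>(\<Sum>j<n. w j * y j) + b\<bar> \<le> r * r * B + r"
proof -
  have "\<bar>\<Sum>j<n. w j * y j\<bar> \<le> (\<Sum>j<n. r * B)"
    using assms by (intro sum_abs[THEN order_trans] sum_mono) (auto simp: abs_mult intro!: mult_mono)
  also have "\<dots> \<le> r * (r * B)"
    using assms by (auto intro: mult_right_mono)
  finally show ?thesis using assms by (simp add: algebra_simps)
qed

lemma abs_affine_diff_le:
  fixes r B E \<eta> b b' :: real
  assumes "real n \<le> r" "\<forall>j<n. \<bar>y j\<bar> \<le> B" "\<forall>j<n. \<bar>y j - y' j\<bar> \<le> E"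
    "\<forall>j<n. \<bar>w j - w' j\<bar> \<le> \<eta>" "\<forall>j<n. \<bar>w' j\<bar> \<le> r" "\<bar>b - b'\<bar> \<le> \<eta>"
    "B \<ge> 0" "E \<ge> 0" "\<eta> \<ge> 0" "r \<ge> 0"
  shows "\<bar>((\<Sum>j<n. w j * y j) + b) - ((\<Sum>j<n. w' j * y' j) + b')\<bar> \<le> r * \<eta> * B + r * r * E + \<eta>"
proof -
  have regroup: "((\<Sum>j<n. w j * y j) + b) - ((\<Sum>j<n. w' j * y' j) + b')
      = (\<Sum>j<n. (w j - w' j) * y j + w' j * (y j - y' j)) + (b - b')"
    by (simp add: sum_subtractf[symmetric] sum.distrib algebra_simps)
  have "\<bar>(w j - w' j) * y j + w' j * (y j - y' j)\<bar> \<le> \<eta> * B + r * E" if "j < n" for j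
  proof -
    have "\<bar>(w j - w' j) * y j\<bar> \<le> \<eta> * B" "\<bar>w' j * (y j - y' j)\<bar> \<le> r * E"
      using assms that by (auto simp: abs_mult intro!: mult_mono)
    then show ?thesis
      using abs_triangle_ineq[of "(w j - w' j) * y j" "w' j * (y j - y' j)"] by linarith
  qed
  then have "\<bar>\<Sum>j<n. (w j - w' j) * y j + w' j * (y j - y' j)\<bar> \<le> (\<Sum>j<n. \<eta> * B + r * E)"
    by (intro sum_abs[THEN order_trans] sum_mono) auto
  also have "\<dots> \<le> r * (\<eta> * B + r * E)"
    using assms by (auto intro: mult_right_mono)
  finally show ?thesis
    unfolding regroup using assms by (simp add: algebra_simps)
qed

lemma nth_le_width: "l < length N \<Longrightarrow> N ! l \<le> width N"
  unfolding width_def by (simp add: nth_mem)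

lemma one_le_power_mult: "(r::real) \<ge> 1 \<Longrightarrow> D \<ge> 0 \<Longrightarrow> 1 \<le> r ^ n * (D + 1)"
  using one_le_power[of r n] mult_mono[of 1 "r ^ n" 1 "D + 1"] by simp

lemma affine_layer_propagation:
  fixes r \<eta> P :: real
  assumes l: "Suc l \<le> depth N" and r: "real (width N) \<le> r" "r \<ge> 2" and "\<eta> \<ge> 0" "P \<ge> 1"
    and \<theta>: "in_Theta_max N r Wt bs" and \<theta>': "in_Theta_max N r Wq bq"
    and close: "all_coords2 N Wt bs Wq bq (\<lambda>t q. \<bar>t - q\<bar> \<le> \<eta>)"
    and y: "\<forall>j<N ! l. \<bar>y j\<bar> + 1 \<le> P \<and> \<bar>y j - y' j\<bar> \<le> real l * \<eta> * P / r"
  shows "\<bar>affine_layer N Wt bs (Suc l) y i\<bar> + 1 \<le> r * r * P"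
    and "\<bar>affine_layer N Wt bs (Suc l) y i - affine_layer N Wq bq (Suc l) y' i\<bar>
           \<le> real (Suc l) * \<eta> * (r * r * P) / r"
proof -
  have "2 * r \<le> r * r"
    using r by (intro mult_right_mono) auto
  then have "r + 1 \<le> r * r"
    using r by linarith
  then have arith_bound: "r * r * (P - 1) + r + 1 \<le> r * r * P"
    using r by (simp add: algebra_simps)
  have "\<eta> \<le> r * \<eta>"
    using r \<open>\<eta> \<ge> 0\<close> mult_right_mono[of 1 r \<eta>] by simp
  moreover have "r * r * (real l * \<eta> * P / r) = r * real l * \<eta> * P"
    "real (Suc l) * \<eta> * (r * r * P) / r = r * real l * \<eta> * P + r * \<eta> * P"
    using r by (simp_all add: field_simps)
  ultimately have arith_diff:
    "r * \<eta> * (P - 1) + r * r * (real l * \<eta> * P / r) + \<eta> \<le> real (Suc l) * \<eta> * (r * r * P) / r"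
    by (simp add: algebra_simps)
  have "l < length N"
    using l unfolding depth_def by simp
  then have width_l: "real (N ! l) \<le> r"
    using nth_le_width[of l N] r(1) by (meson of_nat_mono order_trans)
  have "\<bar>affine_layer N Wt bs (Suc l) y i\<bar> + 1 \<le> r * r * P
    \<and> \<bar>affine_layer N Wt bs (Suc l) y i - affine_layer N Wq bq (Suc l) y' i\<bar>
           \<le> real (Suc l) * \<eta> * (r * r * P) / r"
  proof (cases "i < N ! Suc l")
    case True
    have layer: "1 \<le> Suc l" "Suc l \<le> depth N" "Suc l - 1 = l"
      using l by auto
    have coeffs: "\<forall>j<N ! l. \<bar>Wt (Suc l) i j\<bar> \<le> r \<and> \<bar>Wq (Suc l) i j\<bar> \<le> r
        \<and> \<bar>Wt (Suc l) i j - Wq (Suc l) i j\<bar> \<le> \<eta>"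
      "\<bar>bs (Suc l) i\<bar> \<le> r" "\<bar>bs (Suc l) i - bq (Suc l) i\<bar> \<le> \<eta>"
      using \<theta> \<theta>' close True layer
      unfolding in_Theta_max_def all_coords_def all_coords2_def by metis+
    have "\<bar>(\<Sum>j<N ! l. Wt (Suc l) i j * y j) + bs (Suc l) i\<bar> \<le> r * r * (P - 1) + r"
      by (rule abs_affine_le) (use width_l coeffs y r \<open>P \<ge> 1\<close> in auto)
    moreover have "\<bar>((\<Sum>j<N ! l. Wt (Suc l) i j * y j) + bs (Suc l) i)
        - ((\<Sum>j<N ! l. Wq (Suc l) i j * y' j) + bq (Suc l) i)\<bar>
        \<le> r * \<eta> * (P - 1) + r * r * (real l * \<eta> * P / r) + \<eta>"
      by (rule abs_affine_diff_le) (use width_l coeffs y r \<open>P \<ge> 1\<close> \<open>\<eta> \<ge> 0\<close> in auto)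
    ultimately show ?thesis
      using True arith_bound arith_diff unfolding affine_layer_def by auto
  next
    case False
    have "0 \<le> r * r * (P - 1)"
      using r \<open>P \<ge> 1\<close> by simp
    then have "1 \<le> r * r * P"
      using arith_bound r by linarith
    then show ?thesis
      using False \<open>\<eta> \<ge> 0\<close> r \<open>P \<ge> 1\<close> by (simp add: affine_layer_def)
  qed
  then show "\<bar>affine_layer N Wt bs (Suc l) y i\<bar> + 1 \<le> r * r * P"
    and "\<bar>affine_layer N Wt bs (Suc l) y i - affine_layer N Wq bq (Suc l) y' i\<bar>
           \<le> real (Suc l) * \<eta> * (r * r * P) / r"
    by auto
qed

lemma abs_relu_le: "\<bar>relu u\<bar> \<le> \<bar>u\<bar>"
  by (simp add: relu_def)

lemma abs_relu_diff_le: "\<bar>relu u - relu v\<bar> \<le> \<bar>u - v\<bar>"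
  by (simp add: relu_def)

lemma hidden_propagation:
  fixes r \<eta> D :: real
  assumes "l \<le> depth N" and r: "real (width N) \<le> r" "r \<ge> 2" and "\<eta> \<ge> 0" "D \<ge> 0"
    and \<theta>: "in_Theta_max N r Wt bs" and \<theta>': "in_Theta_max N r Wq bq"
    and close: "all_coords2 N Wt bs Wq bq (\<lambda>t q. \<bar>t - q\<bar> \<le> \<eta>)"
    and x: "\<forall>j<N ! 0. \<bar>x j\<bar> \<le> D"
  shows "\<forall>i<N ! l. \<bar>hidden N Wt bs l x i\<bar> + 1 \<le> r ^ (2 * l) * (D + 1)
    \<and> \<bar>hidden N Wt bs l x i - hidden N Wq bq l x i\<bar> \<le> real l * \<eta> * (r ^ (2 * l) * (D + 1)) / r"
  using \<open>l \<le> depth N\<close>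
proof (induction l)
  case 0
  then show ?case using x by simp
next
  case (Suc l)
  have "1 \<le> r ^ (2 * l) * (D + 1)"
    using r \<open>D \<ge> 0\<close> by (intro one_le_power_mult) auto
  note step = affine_layer_propagation[OF Suc.prems r \<open>\<eta> \<ge> 0\<close> this \<theta> \<theta>' close]
  have IH: "\<forall>j<N ! l. \<bar>hidden N Wt bs l x j\<bar> + 1 \<le> r ^ (2 * l) * (D + 1)
    \<and> \<bar>hidden N Wt bs l x j - hidden N Wq bq l x j\<bar> \<le> real l * \<eta> * (r ^ (2 * l) * (D + 1)) / r"
    using Suc by simp
  have power: "r ^ (2 * Suc l) * (D + 1) = r * r * (r ^ (2 * l) * (D + 1))"
    by (simp add: algebra_simps)
  show ?case
  proof (intro allI impI)
    fix i
    let ?a = "affine_layer N Wt bs (Suc l) (hidden N Wt bs l x) i"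
    let ?b = "affine_layer N Wq bq (Suc l) (hidden N Wq bq l x) i"
    have "\<bar>relu ?a\<bar> + 1 \<le> r ^ (2 * Suc l) * (D + 1)"
      using step(1)[OF IH, of i] abs_relu_le[of ?a] unfolding power by linarith
    moreover have "\<bar>relu ?a - relu ?b\<bar> \<le> real (Suc l) * \<eta> * (r ^ (2 * Suc l) * (D + 1)) / r"
      using step(2)[OF IH, of i] abs_relu_diff_le[of ?a ?b] unfolding power by linarith
    ultimately show "\<bar>hidden N Wt bs (Suc l) x i\<bar> + 1 \<le> r ^ (2 * Suc l) * (D + 1)
      \<and> \<bar>hidden N Wt bs (Suc l) x i - hidden N Wq bq (Suc l) x i\<bar>
          \<le> real (Suc l) * \<eta> * (r ^ (2 * Suc l) * (D + 1)) / r"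
      by simp
  qed
qed

lemma realization_diff_le:
  fixes r \<eta> D :: real
  assumes "depth N \<ge> 1" and r: "real (max (width N) (depth N)) \<le> r" "r \<ge> 2"
    and "\<eta> \<ge> 0" "D \<ge> 0"
    and \<theta>: "in_Theta_max N r Wt bs" and \<theta>': "in_Theta_max N r Wq bq"
    and close: "all_coords2 N Wt bs Wq bq (\<lambda>t q. \<bar>t - q\<bar> \<le> \<eta>)"
    and x: "\<forall>j<N ! 0. \<bar>x j\<bar> \<le> D"
  shows "\<bar>realization N Wt bs x i - realization N Wq bq x i\<bar> \<le> \<eta> * r ^ (2 * depth N) * (D + 1)"
proof -
  obtain l where L: "depth N = Suc l"
    using \<open>depth N \<ge> 1\<close> by (cases "depth N") auto
  have width: "real (width N) \<le> r" and depth: "real (Suc l) \<le> r"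
    using r(1) unfolding L by auto
  define P where "P = r ^ (2 * l) * (D + 1)"
  have "1 \<le> P"
    unfolding P_def using r \<open>D \<ge> 0\<close> by (intro one_le_power_mult) auto
  moreover have "\<forall>j<N ! l. \<bar>hidden N Wt bs l x j\<bar> + 1 \<le> P
    \<and> \<bar>hidden N Wt bs l x j - hidden N Wq bq l x j\<bar> \<le> real l * \<eta> * P / r"
    unfolding P_def using hidden_propagation[OF _ width r(2) \<open>\<eta> \<ge> 0\<close> \<open>D \<ge> 0\<close> \<theta> \<theta>' close x] L by simp
  ultimately have "\<bar>realization N Wt bs x i - realization N Wq bq x i\<bar>
      \<le> real (Suc l) * \<eta> * (r * r * P) / r"
    using affine_layer_propagation(2)[OF _ width r(2) \<open>\<eta> \<ge> 0\<close> _ \<theta> \<theta>' close, of l P] L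
    unfolding realization_def by simp
  also have "\<dots> \<le> r * \<eta> * (r * r * P) / r"
    using depth r(2) \<open>\<eta> \<ge> 0\<close> \<open>1 \<le> P\<close> by (intro divide_right_mono mult_right_mono) auto
  also have "\<dots> = \<eta> * r ^ (2 * depth N) * (D + 1)"
    using r(2) unfolding L P_def by (simp add: power_mult_distrib power2_eq_square)
  finally show ?thesis .
qed

lemma quantization_step_le:
  fixes \<epsilon> :: real and m :: nat
  assumes "\<epsilon> > 0"
  shows "2 powr (- (real m * real_of_int \<lceil>log 2 (1 / \<epsilon>)\<rceil>)) \<le> \<epsilon> powr real m"
proof -
  have "real m * (- log 2 \<epsilon>) \<le> real m * real_of_int \<lceil>log 2 (1 / \<epsilon>)\<rceil>"
    using assms by (intro mult_left_mono) (auto simp: log_divide)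
  then have "2 powr (- (real m * real_of_int \<lceil>log 2 (1 / \<epsilon>)\<rceil>)) \<le> 2 powr (real m * log 2 \<epsilon>)"
    by (intro powr_mono) auto
  also have "\<dots> = (2 powr log 2 \<epsilon>) powr real m"
    by (simp add: powr_powr mult.commute)
  also have "\<dots> = \<epsilon> powr real m"
    using assms by simp
  finally show ?thesis .
qed

lemma quantization_error_le:
  fixes \<epsilon> D :: real and k m L :: nat
  assumes \<epsilon>: "0 < \<epsilon>" "\<epsilon> < 1/2" and "D > 0"
    and m: "real m \<ge> 2 * real k * real L + real k + 1 + log 2 (real_of_int \<lceil>D\<rceil>)"
    and r: "\<epsilon> powr (- real k) \<ge> 2"
  shows "2 powr (- (real m * real_of_int \<lceil>log 2 (1 / \<epsilon>)\<rceil>)) * (\<epsilon> powr (- real k)) ^ (2 * L) * (D + 1) \<le> \<epsilon>"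
proof -
  define C where "C = real_of_int \<lceil>D\<rceil>"
  have C: "C \<ge> 1" "D \<le> C"
    using \<open>D > 0\<close> unfolding C_def by (auto simp: le_of_int_ceiling)
  have power: "(\<epsilon> powr (- real k)) ^ (2 * L) = \<epsilon> powr (- (real k * (2 * real L)))"
    using \<epsilon> by (simp add: powr_realpow[symmetric] powr_powr)
  have "D + 1 \<le> \<epsilon> powr (- real k) * C"
    using C r mult_right_mono[of 2 "\<epsilon> powr (- real k)" C] by linarith
  then have "2 powr (- (real m * real_of_int \<lceil>log 2 (1 / \<epsilon>)\<rceil>)) * (\<epsilon> powr (- real k)) ^ (2 * L) * (D + 1)
      \<le> \<epsilon> powr real m * (\<epsilon> powr (- real k)) ^ (2 * L) * (\<epsilon> powr (- real k) * C)"
    using quantization_step_le[OF \<epsilon>(1)] \<open>D > 0\<close> by (intro mult_mono) auto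
  also have "\<dots> = \<epsilon> powr (real m - 2 * real k * real L - real k) * C"
    unfolding power by (simp add: powr_add[symmetric] algebra_simps)
  also have "\<dots> \<le> \<epsilon> powr (1 + log 2 C) * C"
    using m \<epsilon> C unfolding C_def by (intro mult_right_mono powr_mono') auto
  also have "\<dots> \<le> \<epsilon> * (1/2) powr (log 2 C) * C"
    using \<epsilon> C by (auto simp: powr_add intro!: mult_right_mono mult_left_mono powr_mono2)
  also have "\<dots> = \<epsilon>"
    using C by (simp add: powr_divide)
  finally show ?thesis .
qed

theorem mainTheorem7:
  fixes N :: "nat list"
    and Wt Wq :: "nat \<Rightarrow> nat \<Rightarrow> nat \<Rightarrow> real"
    and bs bq :: "nat \<Rightarrow> nat \<Rightarrow> real"
    and D \<epsilon> :: real and k m :: nat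
  assumes arch: "depth N \<ge> 2" "\<forall>n\<in>set N. n \<ge> 1"
    and D_pos: "D > 0"
    and eps: "0 < \<epsilon>" "\<epsilon> < 1/2"
    and k_ok: "param_norm N Wt bs \<le> \<epsilon> powr (- real k)"
              "real (max (width N) (depth N)) \<le> \<epsilon> powr (- real k)"
    and k_least: "\<forall>j<k. \<not> (param_norm N Wt bs \<le> \<epsilon> powr (- real j)
                          \<and> real (max (width N) (depth N)) \<le> \<epsilon> powr (- real j))"
    and m_ge: "real m \<ge> 2 * real k * real (depth N) + real k + 1 + log 2 (real_of_int \<lceil>D\<rceil>)"
    and quant: "all_coords2 N Wt bs Wq bq
         (\<lambda>t q. is_closest_point
                 (grid (2 powr (- (real m * real_of_int \<lceil>log 2 (1 / \<epsilon>)\<rceil>))) (\<epsilon> powr (- real k))) t q)"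
  shows "in_Theta_max N (\<epsilon> powr (- real k)) Wq bq
       \<and> all_coords N Wq bq
           (\<lambda>q. q \<in> {2 powr (- (real m * real_of_int \<lceil>log 2 (1 / \<epsilon>)\<rceil>)) * of_int z | z. True})
       \<and> sup_norm_cube (N ! 0) (N ! depth N) D
           (\<lambda>x i. realization N Wt bs x i - realization N Wq bq x i) \<le> ereal \<epsilon>"
proof -
  define r where "r = \<epsilon> powr (- real k)"
  define \<eta> where "\<eta> = 2 powr (- (real m * real_of_int \<lceil>log 2 (1 / \<epsilon>)\<rceil>))"
  have r: "real (max (width N) (depth N)) \<le> r" "r \<ge> 2"
    using k_ok(2) arch(1) unfolding r_def by auto
  have \<theta>: "in_Theta_max N r Wt bs"
    using in_Theta_max_mono[OF in_Theta_max_param_norm] k_ok(1) unfolding r_def .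
  have "\<eta> > 0"
    unfolding \<eta>_def by simp
  note Q = closest_grid_quantization[OF \<open>\<eta> > 0\<close> \<theta> quant[folded r_def \<eta>_def]]
  have "\<bar>realization N Wt bs x i - realization N Wq bq x i\<bar> \<le> \<epsilon>" if "\<forall>j<N ! 0. \<bar>x j\<bar> \<le> D" for x i
  proof -
    have "\<bar>realization N Wt bs x i - realization N Wq bq x i\<bar> \<le> \<eta> * r ^ (2 * depth N) * (D + 1)"
      by (rule realization_diff_le[OF _ r _ _ \<theta> Q(1) Q(3) that]) (use arch D_pos \<open>\<eta> > 0\<close> in auto)
    also have "\<dots> \<le> \<epsilon>"
      using quantization_error_le[OF eps D_pos m_ge] r unfolding \<eta>_def r_def by simp
    finally show ?thesis .
  qed
  moreover have "0 < N ! depth N"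
    using arch unfolding depth_def by (simp add: Suc_le_eq)
  ultimately have "sup_norm_cube (N ! 0) (N ! depth N) D
      (\<lambda>x i. realization N Wt bs x i - realization N Wq bq x i) \<le> ereal \<epsilon>"
    by (intro sup_norm_cube_le borel_measurable_diff realization_measurable) auto
  then show ?thesis
    using Q(1,2) unfolding r_def \<eta>_def by simp
qed

end
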